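(* Let $(X,d,b)$ be a bicomplete quasi-pseudometric type space. Let $J:X\to X$ be a continuous single-valued map such that $r\,d(x,y)\le d(Jx,Jy)$ for all $x,y\in X$, for some constant $r>0$, and let $F:X\to CB(X)$ be a set-valued map such that $$H(Fx,Fy)\le \alpha\big[d(Jx,Fx)+d(Jy,Fy)\big]\quad\text{for all }x,y\in X,$$ where $\alpha\in(0,1/2)$. Then for every $\varepsilon>0$, $$\delta(C_\varepsilon)\le \frac{b\varepsilon}{r}\,(1+b+2\alpha b).$$
   Context: A quasi-pseudometric type space $(X,d,b)$ consists of a nonempty set $X$, a constant $b\ge 1$ and a map $d:X\times X\to[0,\infty)$ with $d(x,x)=0$ and $d(x,z)\le b\,[d(x,y)+d(y,z)]$ for all $x,y,z\in X$. It is $T_0$ if $d(x,y)=0=d(y,x)$ implies $x=y$. Write $d^s(x,y)=\max\{d(x,y),d(y,x)\}$; the space is bicomplete if it is $T_0$ and every $d^s$-Cauchy sequence converges in $d^s$. For $x\in X$ and nonempty $A\subseteq X$: $d(x,A)=\inf_{a\in A}d(x,a)$, $d(A,x)=\inf_{a\in A}d(a,x)$; for nonempty $A,B$: $H(A,B)=\max\{\sup_{a\in A}d(a,B),\sup_{b'\in B}d(A,b')\}$. $CB(X)$ denotes the nonempty $d^s$-bounded, $d^s$-closed subsets; continuity of $J$ is with respect to $d^s$. For $\varepsilon>0$, $C_\varepsilon=\{x\in X:\sup_{y\in Fx}d^s(Jx,y)\le\varepsilon\}$, and for $A\subseteq X$, $\delta(A)=\sup_{x,y\in A}d(x,y)$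 (the diameter). *)

theory Defs
  imports "HOL-Analysis.Analysis"
begin

definition qpm_type_space :: "'a set \<Rightarrow> ('a \<Rightarrow> 'a \<Rightarrow> real) \<Rightarrow> real \<Rightarrow> bool" where
  "qpm_type_space X d b \<longleftrightarrow> X \<noteq> {} \<and> b \<ge> 1 \<and>
     (\<forall>x\<in>X. \<forall>y\<in>X. d x y \<ge> 0) \<and> (\<forall>x\<in>X. d x x = 0) \<and>
     (\<forall>x\<in>X. \<forall>y\<in>X. \<forall>z\<in>X. d x z \<le> b * (d x y + d y z))"

definition T0_space :: "'a set \<Rightarrow> ('a \<Rightarrow> 'a \<Rightarrow> real) \<Rightarrow> bool" where
  "T0_space X d \<longleftrightarrow> (\<forall>x\<in>X. \<forall>y\<in>X. d x y = 0 \<and> d y x = 0 \<longrightarrow> x = y)"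

definition dsym :: "('a \<Rightarrow> 'a \<Rightarrow> real) \<Rightarrow> 'a \<Rightarrow> 'a \<Rightarrow> real" where
  "dsym d x y = max (d x y) (d y x)"

definition ds_cauchy :: "('a \<Rightarrow> 'a \<Rightarrow> real) \<Rightarrow> (nat \<Rightarrow> 'a) \<Rightarrow> bool" where
  "ds_cauchy d s \<longleftrightarrow> (\<forall>e>0. \<exists>N. \<forall>m\<ge>N. \<forall>n\<ge>N. dsym d (s m) (s n) < e)"

definition ds_converges_to :: "('a \<Rightarrow> 'a \<Rightarrow> real) \<Rightarrow> (nat \<Rightarrow> 'a) \<Rightarrow> 'a \<Rightarrow> bool" where
  "ds_converges_to d s x \<longleftrightarrow> (\<lambda>n. dsym d (s n) x) \<longlonglongrightarrow> 0"

definition bicomplete :: "'a set \<Rightarrow> ('a \<Rightarrow> 'a \<Rightarrow> real) \<Rightarrow> bool" where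
  "bicomplete X d \<longleftrightarrow> T0_space X d \<and>
     (\<forall>s. (\<forall>n. s n \<in> X) \<and> ds_cauchy d s \<longrightarrow> (\<exists>x\<in>X. ds_converges_to d s x))"

definition dist_pt_set :: "('a \<Rightarrow> 'a \<Rightarrow> real) \<Rightarrow> 'a \<Rightarrow> 'a set \<Rightarrow> real" where
  "dist_pt_set d x A = (INF a\<in>A. d x a)"

definition dist_set_pt :: "('a \<Rightarrow> 'a \<Rightarrow> real) \<Rightarrow> 'a set \<Rightarrow> 'a \<Rightarrow> real" where
  "dist_set_pt d A x = (INF a\<in>A. d a x)"

definition hausdorff_qpm :: "('a \<Rightarrow> 'a \<Rightarrow> real) \<Rightarrow> 'a set \<Rightarrow> 'a set \<Rightarrow> ereal" where
  "hausdorff_qpm d A B = max (SUP a\<in>A. ereal (dist_pt_set d a B)) (SUP b'\<in>B. ereal (dist_set_pt d A b'))"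

definition ds_bounded :: "('a \<Rightarrow> 'a \<Rightarrow> real) \<Rightarrow> 'a set \<Rightarrow> bool" where
  "ds_bounded d A \<longleftrightarrow> (\<exists>M. \<forall>x\<in>A. \<forall>y\<in>A. dsym d x y \<le> M)"

definition ds_closed :: "'a set \<Rightarrow> ('a \<Rightarrow> 'a \<Rightarrow> real) \<Rightarrow> 'a set \<Rightarrow> bool" where
  "ds_closed X d A \<longleftrightarrow> (\<forall>s x. (\<forall>n. s n \<in> A) \<and> x \<in> X \<and> ds_converges_to d s x \<longrightarrow> x \<in> A)"

definition CB :: "'a set \<Rightarrow> ('a \<Rightarrow> 'a \<Rightarrow> real) \<Rightarrow> 'a set set" where
  "CB X d = {A. A \<subseteq> X \<and> A \<noteq> {} \<and> ds_bounded d A \<and> ds_closed X d A}"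

definition ds_continuous :: "'a set \<Rightarrow> ('a \<Rightarrow> 'a \<Rightarrow> real) \<Rightarrow> ('a \<Rightarrow> 'a) \<Rightarrow> bool" where
  "ds_continuous X d J \<longleftrightarrow> (\<forall>s x. (\<forall>n. s n \<in> X) \<and> x \<in> X \<and> ds_converges_to d s x
      \<longrightarrow> ds_converges_to d (\<lambda>n. J (s n)) (J x))"

definition C_eps :: "'a set \<Rightarrow> ('a \<Rightarrow> 'a \<Rightarrow> real) \<Rightarrow> ('a \<Rightarrow> 'a) \<Rightarrow> ('a \<Rightarrow> 'a set) \<Rightarrow> real \<Rightarrow> 'a set" where
  "C_eps X d J F \<epsilon> = {x\<in>X. (SUP y\<in>F x. ereal (dsym d (J x) y)) \<le> ereal \<epsilon>}"

definition diam_qpm :: "('a \<Rightarrow> 'a \<Rightarrow> real) \<Rightarrow> 'a set \<Rightarrow> ereal" where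
  "diam_qpm d A = (SUP p\<in>A \<times> A. ereal (d (fst p) (snd p)))"

end

theory Submission
  imports Defs
begin

text \<open>Fix \<open>x, y \<in> C\<^sub>\<epsilon>\<close> and \<open>u \<in> Fx\<close>. The contraction condition gives
  \<open>d(u, Fy) \<le> H(Fx, Fy) \<le> \<alpha>(d(Jx, Fx) + d(Jy, Fy)) \<le> 2\<alpha>\<epsilon>\<close>, and every point of \<open>Fy\<close> is
  \<open>\<epsilon>\<close>-close to \<open>Jy\<close>, so \<open>d(u, Jy) \<le> b(2\<alpha>\<epsilon> + \<epsilon>)\<close>. One more triangle inequality through \<open>u\<close>
  yields \<open>r d(x, y) \<le> d(Jx, Jy) \<le> b(\<epsilon> + b(2\<alpha>\<epsilon> + \<epsilon>))\<close>.\<close>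

lemma qpm_type_spaceD:
  assumes "qpm_type_space X d b"
  shows "b \<ge> 1" and "\<And>x y. x \<in> X \<Longrightarrow> y \<in> X \<Longrightarrow> 0 \<le> d x y"
    and "\<And>x y z. x \<in> X \<Longrightarrow> y \<in> X \<Longrightarrow> z \<in> X \<Longrightarrow> d x z \<le> b * (d x y + d y z)"
  using assms unfolding qpm_type_space_def by auto

lemma dist_pt_set_le:
  assumes "a \<in> A" and "\<forall>a\<in>A. 0 \<le> d x a"
  shows "dist_pt_set d x A \<le> d x a"
  unfolding dist_pt_set_def using assms by (meson bdd_belowI2 cINF_lower)

lemma dist_pt_set_approx:
  assumes "A \<noteq> {}" and "\<forall>a\<in>A. 0 \<le> d x a" and "e > 0"
  obtains a where "a \<in> A" and "d x a < dist_pt_set d x A + e"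
proof -
  have "Inf (d x ` A) < dist_pt_set d x A + e"
    using \<open>e > 0\<close> unfolding dist_pt_set_def by simp
  moreover have "bdd_below (d x ` A)"
    using assms(2) by (meson bdd_belowI2)
  ultimately show ?thesis
    using that \<open>A \<noteq> {}\<close> by (auto simp: cInf_less_iff)
qed

lemma dist_pt_set_le_hausdorff_qpm:
  assumes "a \<in> A"
  shows "ereal (dist_pt_set d a B) \<le> hausdorff_qpm d A B"
proof -
  have "ereal (dist_pt_set d a B) \<le> (SUP a\<in>A. ereal (dist_pt_set d a B))"
    using assms by (rule SUP_upper)
  also have "\<dots> \<le> hausdorff_qpm d A B"
    unfolding hausdorff_qpm_def by simp
  finally show ?thesis .
qed

lemma qpm_le_via_dist_pt_set:
  assumes "qpm_type_space X d b" and "u \<in> X" and "z \<in> X" and "A \<subseteq> X" and "A \<noteq> {}"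
    and "\<forall>v\<in>A. d v z \<le> c"
  shows "d u z \<le> b * (dist_pt_set d u A + c)"
proof (rule field_le_epsilon)
  fix e :: real
  assume "e > 0"
  have "b \<ge> 1"
    using qpm_type_spaceD(1)[OF assms(1)] .
  have "\<forall>v\<in>A. 0 \<le> d u v"
    using qpm_type_spaceD(2)[OF assms(1)] assms(2,4) by auto
  moreover have "e / b > 0"
    using \<open>e > 0\<close> \<open>b \<ge> 1\<close> by simp
  ultimately obtain v where "v \<in> A" and v: "d u v < dist_pt_set d u A + e / b"
    using dist_pt_set_approx[OF \<open>A \<noteq> {}\<close>] by blast
  have "d u z \<le> b * (d u v + d v z)"
    using qpm_type_spaceD(3)[OF assms(1)] assms(2,3,4) \<open>v \<in> A\<close> by auto
  also have "\<dots> \<le> b * (dist_pt_set d u A + e / b + c)"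
    using v assms(6) \<open>v \<in> A\<close> \<open>b \<ge> 1\<close> by (intro mult_left_mono add_mono) auto
  also have "\<dots> = b * (dist_pt_set d u A + c) + e"
    using \<open>b \<ge> 1\<close> by (simp add: algebra_simps)
  finally show "d u z \<le> b * (dist_pt_set d u A + c) + e" .
qed

lemma C_epsD:
  assumes "x \<in> C_eps X d J F \<epsilon>" and "y \<in> F x"
  shows "d (J x) y \<le> \<epsilon>" and "d y (J x) \<le> \<epsilon>"
proof -
  have "ereal (dsym d (J x) y) \<le> (SUP y\<in>F x. ereal (dsym d (J x) y))"
    using assms(2) by (rule SUP_upper)
  also have "\<dots> \<le> ereal \<epsilon>"
    using assms(1) unfolding C_eps_def by auto
  finally show "d (J x) y \<le> \<epsilon>" and "d y (J x) \<le> \<epsilon>"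
    unfolding dsym_def by auto
qed

lemma diam_qpm_le:
  assumes "\<And>x y. x \<in> A \<Longrightarrow> y \<in> A \<Longrightarrow> d x y \<le> M"
  shows "diam_qpm d A \<le> ereal M"
  unfolding diam_qpm_def using assms by (auto intro: SUP_least)

lemma C_eps_image_dist_le:
  assumes "qpm_type_space X d b" and "\<forall>x\<in>X. J x \<in> X"
    and "\<forall>x\<in>X. F x \<subseteq> X \<and> F x \<noteq> {}" and "\<alpha> \<ge> 0"
    and "\<forall>x\<in>X. \<forall>y\<in>X. hausdorff_qpm d (F x) (F y)
            \<le> ereal (\<alpha> * (dist_pt_set d (J x) (F x) + dist_pt_set d (J y) (F y)))"
    and x: "x \<in> C_eps X d J F \<epsilon>" and y: "y \<in> C_eps X d J F \<epsilon>"
  shows "d (J x) (J y) \<le> b * \<epsilon> * (1 + b + 2 * \<alpha> * b)"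
proof -
  note b1 = qpm_type_spaceD(1)[OF assms(1)]
  note nonneg = qpm_type_spaceD(2)[OF assms(1)]
  have "x \<in> X" and "y \<in> X"
    using x y unfolding C_eps_def by auto
  then have JX: "J x \<in> X" "J y \<in> X" and FX: "F x \<subseteq> X" "F x \<noteq> {}" "F y \<subseteq> X" "F y \<noteq> {}"
    using assms(2,3) by auto
  have dist_J_F: "dist_pt_set d (J z) (F z) \<le> \<epsilon>" if "z \<in> C_eps X d J F \<epsilon>" "J z \<in> X"
    "F z \<subseteq> X" "F z \<noteq> {}" for z
  proof -
    obtain w where "w \<in> F z"
      using \<open>F z \<noteq> {}\<close> by auto
    moreover have "\<forall>a\<in>F z. 0 \<le> d (J z) a"
      using nonneg that(2,3) by blast
    ultimately show ?thesis
      using dist_pt_set_le C_epsD(1)[OF that(1)] by (meson order_trans)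
  qed
  obtain u where "u \<in> F x"
    using FX(2) by auto
  then have "u \<in> X"
    using FX(1) by auto
  have "ereal (dist_pt_set d u (F y)) \<le> hausdorff_qpm d (F x) (F y)"
    using \<open>u \<in> F x\<close> by (rule dist_pt_set_le_hausdorff_qpm)
  also have "\<dots> \<le> ereal (\<alpha> * (dist_pt_set d (J x) (F x) + dist_pt_set d (J y) (F y)))"
    using assms(5) \<open>x \<in> X\<close> \<open>y \<in> X\<close> by auto
  also have "\<dots> \<le> ereal (\<alpha> * (\<epsilon> + \<epsilon>))"
    using dist_J_F[OF x JX(1) FX(1,2)] dist_J_F[OF y JX(2) FX(3,4)] \<open>\<alpha> \<ge> 0\<close>
    by (simp add: mult_left_mono)
  finally have u_Fy: "dist_pt_set d u (F y) \<le> 2 * \<alpha> * \<epsilon>"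
    by simp
  have "d u (J y) \<le> b * (dist_pt_set d u (F y) + \<epsilon>)"
    using qpm_le_via_dist_pt_set[OF assms(1) \<open>u \<in> X\<close> JX(2) FX(3,4)] C_epsD(2)[OF y] by blast
  also have "\<dots> \<le> b * (2 * \<alpha> * \<epsilon> + \<epsilon>)"
    using u_Fy b1 by (intro mult_left_mono) auto
  finally have u_Jy: "d u (J y) \<le> b * (2 * \<alpha> * \<epsilon> + \<epsilon>)" .
  have "d (J x) (J y) \<le> b * (d (J x) u + d u (J y))"
    using qpm_type_spaceD(3)[OF assms(1)] JX \<open>u \<in> X\<close> by auto
  also have "\<dots> \<le> b * (\<epsilon> + b * (2 * \<alpha> * \<epsilon> + \<epsilon>))"
    using C_epsD(1)[OF x \<open>u \<in> F x\<close>] u_Jy b1 by (intro mult_left_mono) auto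
  also have "\<dots> = b * \<epsilon> * (1 + b + 2 * \<alpha> * b)"
    by (simp add: algebra_simps)
  finally show ?thesis .
qed

theorem mainTheorem13:
  fixes X :: "'a set" and d :: "'a \<Rightarrow> 'a \<Rightarrow> real" and b r \<alpha> \<epsilon> :: real
    and J :: "'a \<Rightarrow> 'a" and F :: "'a \<Rightarrow> 'a set"
  assumes "qpm_type_space X d b"
    and "bicomplete X d"
    and "\<forall>x\<in>X. J x \<in> X"
    and "ds_continuous X d J"
    and "r > 0"
    and "\<forall>x\<in>X. \<forall>y\<in>X. r * d x y \<le> d (J x) (J y)"
    and "\<forall>x\<in>X. F x \<in> CB X d"
    and "0 < \<alpha>" and "\<alpha> < 1/2"
    and "\<forall>x\<in>X. \<forall>y\<in>X. hausdorff_qpm d (F x) (F y)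
            \<le> ereal (\<alpha> * (dist_pt_set d (J x) (F x) + dist_pt_set d (J y) (F y)))"
    and "\<epsilon> > 0"
  shows "diam_qpm d (C_eps X d J F \<epsilon>) \<le> ereal (b * \<epsilon> / r * (1 + b + 2 * \<alpha> * b))"
proof (rule diam_qpm_le)
  fix x y
  assume x: "x \<in> C_eps X d J F \<epsilon>" and y: "y \<in> C_eps X d J F \<epsilon>"
  have "\<forall>x\<in>X. F x \<subseteq> X \<and> F x \<noteq> {}"
    using assms(7) unfolding CB_def by auto
  then have "d (J x) (J y) \<le> b * \<epsilon> * (1 + b + 2 * \<alpha> * b)"
    using C_eps_image_dist_le[OF assms(1,3) _ _ assms(10) x y] \<open>0 < \<alpha>\<close> by (simp add: less_imp_le)
  moreover have "r * d x y \<le> d (J x) (J y)"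
    using assms(6) x y unfolding C_eps_def by auto
  ultimately show "d x y \<le> b * \<epsilon> / r * (1 + b + 2 * \<alpha> * b)"
    using \<open>r > 0\<close> by (simp add: field_simps)
qed

end
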